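(* Let $n_T,n_R,N_c$ be positive integers, $N_0>0$, $\mathcal{P}>0$, $\rho\in[0,1]$, and let $Q\in\mathbb{C}^{n_T\times n_T}$ be Hermitian positive definite with $\operatorname{tr}(Q)\le\mathcal{P}$, and $r\ge0$ with $I_{n_T}-rQ$ positive definite. Let $H=\Phi_R^{1/2}H_0\Phi_T^{1/2}$ with $\Phi_T,\Phi_R$ Hermitian positive definite and $H_0\in\mathbb{C}^{n_R\times n_T}$ having i.i.d. zero-mean unit-variance circularly symmetric complex Gaussian entries, with pdf $p_H$. Let $p_X(X)=\pi^{-n_TN_c}\det(Q)^{-N_c}\exp\operatorname{tr}(-Q^{-1}XX^\dagger)$ for $X\in\mathbb{C}^{n_T\times N_c}$, and $p(Y\mid X,H)=(\pi N_0)^{-n_RN_c}\exp\operatorname{tr}\{-\frac1{N_0}(Y-HX)(Y-HX)^\dagger\}$ for $Y\in\mathbb{C}^{n_R\times N_c}$. Define $$E_0=-\frac{1}{N_c}\ln\Big\{\int p_H(H)\int\Big(\int p_X(X)e^{r[\operatorname{tr}(XX^\dagger)-N_c\mathcal{P}]}p(Y\mid X,H)^{1/(1+\rho)}dX\Big)^{1+\rho}dY\,dH\Big\}.$$ Then $$E_0=r\mathcal{P}(1+\rho)+(1+\rho)\ln\det(I_{n_T}-rQ)-\frac1{N_c}\ln\mathbb{E}\Big\{\det\Big(I_{n_R}+\frac{H(Q^{-1}-rI_{n_T})^{-1}H^\dagger}{N_0(1+\rho)}\Big)^{-N_c\rho}\Big\}.$$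
   Context: Integrals over a complex matrix are with respect to Lebesgue measure $\prod d\Re X_{ij}\,d\Im X_{ij}$ on its entries; $\mathbb{E}$ is expectation over $H$. *)

theory Defs
  imports "HOL-Analysis.Analysis" "HOL-Probability.Probability"
begin

text \<open>Complex matrices are represented as elements of complex^'n^'m (m rows, n columns);
  the dimensions are the cardinalities of the finite index types. Lebesgue measure on
  the entries (product of d Re d Im) is lborel on this euclidean space.\<close>

definition cadj :: "complex^'n^'m \<Rightarrow> complex^'m^'n" where
  "cadj A = (\<chi> i j. cnj (A $ j $ i))"

definition hermitian :: "complex^'n^'n \<Rightarrow> bool" where
  "hermitian A \<longleftrightarrow> cadj A = A"

definition herm_pd :: "complex^'n^'n \<Rightarrow> bool" where
  "herm_pd A \<longleftrightarrow> hermitian A \<and>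
     (\<forall>x::complex^'n. x \<noteq> 0 \<longrightarrow> Re (\<Sum>i\<in>UNIV. \<Sum>j\<in>UNIV. cnj (x $ i) * A $ i $ j * x $ j) > 0)"

definition pd_sqrt :: "complex^'n^'n \<Rightarrow> complex^'n^'n" where
  "pd_sqrt A = (THE S. herm_pd S \<and> S ** S = A)"

definition H0_law :: "(complex^'t^'r) measure" where
  "H0_law = density lborel (\<lambda>H0. ennreal (pi powr (- real (CARD('r) * CARD('t)))
        * exp (- (\<Sum>i\<in>UNIV. \<Sum>j\<in>UNIV. (cmod (H0 $ i $ j))\<^sup>2))))"

text \<open>Law of H = Phi_R^(1/2) H0 Phi_T^(1/2); integrating against p_H is integrating w.r.t. this law.\<close>
definition H_law :: "complex^'r^'r \<Rightarrow> complex^'t^'t \<Rightarrow> (complex^'t^'r) measure" where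
  "H_law PhiR PhiT = distr H0_law lborel (\<lambda>H0. pd_sqrt PhiR ** H0 ** pd_sqrt PhiT)"

definition pX :: "complex^'t^'t \<Rightarrow> complex^'c^'t \<Rightarrow> real" where
  "pX Q X = pi powr (- real (CARD('t) * CARD('c))) * Re (det Q) powr (- real CARD('c))
      * exp (Re (trace (- (matrix_inv Q ** X ** cadj X))))"

definition pYXH :: "real \<Rightarrow> complex^'c^'r \<Rightarrow> complex^'c^'t \<Rightarrow> complex^'t^'r \<Rightarrow> real" where
  "pYXH N0 Y X H = (pi * N0) powr (- real (CARD('r) * CARD('c)))
      * exp (Re (trace (- ((1 / N0) *\<^sub>R ((Y - H ** X) ** cadj (Y - H ** X))))))"

definition E0 :: "real \<Rightarrow> real \<Rightarrow> real \<Rightarrow> real \<Rightarrow> complex^'t^'t \<Rightarrow> complex^'r^'r \<Rightarrow> complex^'t^'t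
                   \<Rightarrow> 'c::finite itself \<Rightarrow> real" where
  "E0 N0 P \<rho> r Q PhiR PhiT (_ :: 'c itself) =
     - (1 / real CARD('c)) * ln (
        integral\<^sup>L (H_law PhiR PhiT) (\<lambda>H.
          integral\<^sup>L lborel (\<lambda>Y :: complex^'c^'r.
            (integral\<^sup>L lborel (\<lambda>X :: complex^'c^'t.
               pX Q X * exp (r * (Re (trace (X ** cadj X)) - real CARD('c) * P))
                 * pYXH N0 Y X H powr (1 / (1 + \<rho>)))) powr (1 + \<rho>))))"

end

theory Submission
  imports Defs
begin

text \<open>
  All integrals in E_0 are complex Gaussian integrals, and the basic one is
  int exp (- z^* M z) dz = pi^n / det M for Hermitian positive definite M. It follows by Gaussian
  elimination: M = E^* N E for a shear E of unit determinant, and shearing one coordinate by a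
  function of the others preserves Lebesgue measure.

  The trace forms in p_X and p(Y | X, H) are sums over the N_c columns x, y of X and Y, so the
  X-integral factors. With A = Q^-1 - r I and s = N_0 (1 + rho), completing the square gives
  x^* A x + |y - H x|^2 / s = (x - m)^* B (x - m) + y^* K y, where B = A + H^* H / s and
  K = (I - H B^-1 H^* / s) / s. Hence the X-integral is (pi^n_T / det B)^N_c times a Gaussian in Y,
  whose (1 + rho)-th power is again Gaussian. Integrating exp (- (x^* A x + |y - H x|^2 / s)) in
  both orders gives det B det K = det A / s^n_R, and the Woodbury identity
  (I + H A^-1 H^* / s) s K = I identifies the result with the determinant in the statement.
  Finally B >= A makes that determinant at least 1, so the integrand of the expectation over H is
  bounded and positive.
\<close>

section \<open>Lebesgue measure on vectors and matrices\<close>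

lemma lborel_eq_distr_PiM_reindex:
  fixes \<phi> :: "('k::finite \<Rightarrow> 'a::euclidean_space) \<Rightarrow> 'b::euclidean_space"
    and \<beta> :: "'k \<times> 'a \<Rightarrow> 'b"
  assumes bij: "bij_betw \<beta> (UNIV \<times> Basis) Basis"
    and inner: "\<And>f k a. a \<in> Basis \<Longrightarrow> \<phi> f \<bullet> \<beta> (k, a) = f k \<bullet> a"
  shows "distr (PiM UNIV (\<lambda>_. lborel)) borel \<phi> = lborel"
proof -
  interpret P: product_sigma_finite "\<lambda>_::'k. lborel::'a measure" by standard
  have \<phi>_eq: "\<phi> f = (\<Sum>p\<in>UNIV \<times> Basis. (f (fst p) \<bullet> snd p) *\<^sub>R \<beta> p)" for f
  proof -
    have "\<phi> f = (\<Sum>b\<in>Basis. (\<phi> f \<bullet> b) *\<^sub>R b)" by (simp add: euclidean_representation)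
    also have "\<dots> = (\<Sum>p\<in>UNIV \<times> Basis. (\<phi> f \<bullet> \<beta> p) *\<^sub>R \<beta> p)"
      using sum.reindex_bij_betw[OF bij, of "\<lambda>b. (\<phi> f \<bullet> b) *\<^sub>R b"] by simp
    also have "\<dots> = (\<Sum>p\<in>UNIV \<times> Basis. (f (fst p) \<bullet> snd p) *\<^sub>R \<beta> p)"
      by (intro sum.cong refl) (auto simp: inner)
    finally show ?thesis .
  qed
  have meas: "\<phi> \<in> borel_measurable (PiM UNIV (\<lambda>_. lborel))"
    unfolding \<phi>_eq[abs_def] by measurable
  define \<psi> where "\<psi> x k = (\<Sum>a\<in>Basis. (x \<bullet> \<beta> (k, a)) *\<^sub>R a)" for x k
  have \<psi>_inner: "\<psi> x k \<bullet> a = x \<bullet> \<beta> (k, a)" if "a \<in> Basis" for x k a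
    using that by (simp add: \<psi>_def inner_sum_left inner_Basis if_distrib cong: if_cong)
  have Basis_eq: "Basis = \<beta> ` (UNIV \<times> Basis)" using bij by (simp add: bij_betw_def)
  have \<beta>_Basis: "\<beta> (k, a) \<in> Basis" if "a \<in> Basis" for k a using bij that by (auto simp: bij_betw_def)
  show ?thesis
  proof (rule lborel_eqI[symmetric])
    show "sets (distr (PiM UNIV (\<lambda>_. lborel)) borel \<phi>) = sets borel" by simp
    fix l u :: 'b assume lu: "\<And>b. b \<in> Basis \<Longrightarrow> l \<bullet> b \<le> u \<bullet> b"
    have "\<phi> f \<in> box l u \<longleftrightarrow> (\<forall>k. f k \<in> box (\<psi> l k) (\<psi> u k))" for f
    proof -
      have "\<phi> f \<in> box l u \<longleftrightarrow> (\<forall>p\<in>UNIV \<times> Basis. l \<bullet> \<beta> p < \<phi> f \<bullet> \<beta> p \<and> \<phi> f \<bullet> \<beta> p < u \<bullet> \<beta> p)"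
        unfolding mem_box by (subst Basis_eq) auto
      also have "\<dots> \<longleftrightarrow> (\<forall>k. f k \<in> box (\<psi> l k) (\<psi> u k))"
        unfolding mem_box by (auto simp: \<psi>_inner inner)
      finally show ?thesis .
    qed
    then have preimage: "\<phi> -` box l u \<inter> space (PiM UNIV (\<lambda>_. lborel)) = PiE UNIV (\<lambda>k. box (\<psi> l k) (\<psi> u k))"
      by (auto simp: space_PiM PiE_def Pi_def extensional_def)
    have "emeasure (distr (PiM UNIV (\<lambda>_. lborel)) borel \<phi>) (box l u)
        = emeasure (PiM UNIV (\<lambda>_. lborel)) (PiE UNIV (\<lambda>k. box (\<psi> l k) (\<psi> u k)))"
      by (subst emeasure_distr[OF meas]) (simp_all add: preimage)
    also have "\<dots> = (\<Prod>k\<in>UNIV. emeasure lborel (box (\<psi> l k) (\<psi> u k)))"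
      by (rule P.emeasure_PiM) auto
    also have "\<dots> = (\<Prod>k\<in>UNIV. ennreal (\<Prod>a\<in>Basis. (u - l) \<bullet> \<beta> (k, a)))"
      using lu \<beta>_Basis
      by (intro prod.cong refl) (auto simp: emeasure_lborel_box \<psi>_inner inner_diff_left)
    also have "\<dots> = ennreal (\<Prod>p\<in>UNIV \<times> Basis. (u - l) \<bullet> \<beta> p)"
      using lu \<beta>_Basis
      by (subst prod_ennreal) (auto intro!: prod_nonneg simp: inner_diff_left prod.cartesian_product)
    also have "(\<Prod>p\<in>UNIV \<times> Basis. (u - l) \<bullet> \<beta> p) = (\<Prod>b\<in>Basis. (u - l) \<bullet> b)"
      using prod.reindex_bij_betw[OF bij, of "\<lambda>b. (u - l) \<bullet> b"] by simp
    finally show "emeasure (distr (PiM UNIV (\<lambda>_. lborel)) borel \<phi>) (box l u)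
        = ennreal (\<Prod>b\<in>Basis. (u - l) \<bullet> b)" .
  qed
qed

lemma lborel_eq_distr_vec_lambda:
  "distr (PiM UNIV (\<lambda>_::'n::finite. lborel)) borel vec_lambda = (lborel :: ('a::euclidean_space^'n) measure)"
proof (rule lborel_eq_distr_PiM_reindex[where \<beta>="\<lambda>(k, a). axis k a"])
  show "bij_betw (\<lambda>(k, a). axis k a) (UNIV \<times> Basis) (Basis :: ('a^'n) set)"
    by (auto simp: bij_betw_def inj_on_def axis_eq_axis nonzero_Basis Basis_vec_def)
qed (simp add: inner_axis)

lemma lborel_eq_distr_columns:
  "distr (PiM UNIV (\<lambda>_::'c::finite. lborel)) borel (\<lambda>f. \<chi> i j. f j $ i)
     = (lborel :: ('a::euclidean_space^'c^'t::finite) measure)"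
proof (rule lborel_eq_distr_PiM_reindex[where \<beta>="\<lambda>(j, b). \<chi> i. axis j (b $ i)"])
  have axis_axis: "(\<chi> i'. axis j (axis i w $ i')) = axis i (axis j w)" for i :: 't and j :: 'c and w :: 'a
    by (simp add: vec_eq_iff axis_def)
  show "bij_betw (\<lambda>(j, b). \<chi> i. axis j (b $ i)) (UNIV \<times> Basis) (Basis :: ('a^'c^'t) set)"
    unfolding bij_betw_def inj_on_def
    by (auto simp: Basis_vec_def axis_axis axis_eq_axis nonzero_Basis image_iff)
  fix f :: "'c \<Rightarrow> 'a^'t" and k :: 'c and a :: "'a^'t"
  show "(\<chi> i j. f j $ i) \<bullet> (case (k, a) of (j, b) \<Rightarrow> \<chi> i. axis j (b $ i)) = f k \<bullet> a"
    by (simp add: inner_vec_def axis_def if_distrib[where f="\<lambda>z. _ \<bullet> z"] cong: if_cong)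
qed

lemma borel_measurable_vec_nth[measurable]:
  "(\<lambda>x::'a::euclidean_space^'n::finite. x $ i) \<in> borel_measurable borel"
  by (intro borel_measurable_continuous_onI continuous_intros)

lemma borel_measurable_vec_lambda[measurable]:
  fixes f :: "'n::finite \<Rightarrow> 'b \<Rightarrow> 'a::euclidean_space"
  assumes "\<And>i. f i \<in> borel_measurable M"
  shows "(\<lambda>x. \<chi> i. f i x) \<in> borel_measurable M"
proof (subst borel_measurable_euclidean_space, intro ballI)
  fix b :: "'a^'n" assume "b \<in> Basis"
  then obtain i a where b: "b = axis i a" "a \<in> Basis" by (auto simp: Basis_vec_def)
  have "(\<lambda>x. (\<chi> i. f i x) \<bullet> b) = (\<lambda>x. f i x \<bullet> a)" by (simp add: b inner_axis)
  then show "(\<lambda>x. (\<chi> i. f i x) \<bullet> b) \<in> borel_measurable M" using assms by simp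
qed

lemma borel_measurable_axis[measurable]:
  "(\<lambda>x::'a::euclidean_space. axis k x :: 'a^'n::finite) \<in> borel_measurable borel"
  unfolding axis_def by measurable

lemma borel_measurable_vec_lambda_PiM[measurable]:
  "(vec_lambda :: ('n::finite \<Rightarrow> 'a::euclidean_space) \<Rightarrow> 'a^'n) \<in> borel_measurable (PiM UNIV (\<lambda>_. lborel))"
proof -
  have "(\<lambda>f. \<chi> i. (f::'n \<Rightarrow> 'a) i) \<in> borel_measurable (PiM UNIV (\<lambda>_. lborel))"
    by (intro borel_measurable_vec_lambda measurable_component_singleton) auto
  then show ?thesis by simp
qed

lemma nn_integral_lborel_vec_eq_PiM:
  fixes g :: "'a::euclidean_space^'n::finite \<Rightarrow> ennreal"
  assumes [measurable]: "g \<in> borel_measurable borel"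
  shows "(\<integral>\<^sup>+z. g z \<partial>lborel) = (\<integral>\<^sup>+w. g (vec_lambda w) \<partial>PiM UNIV (\<lambda>_. lborel))"
  by (subst lborel_eq_distr_vec_lambda[symmetric]) (simp add: nn_integral_distr)

lemma nn_integral_lborel_translate:
  fixes h :: "'a::euclidean_space \<Rightarrow> ennreal"
  assumes [measurable]: "h \<in> borel_measurable borel"
  shows "(\<integral>\<^sup>+y. h (y + c) \<partial>lborel) = (\<integral>\<^sup>+y. h y \<partial>lborel)"
proof -
  have "(\<integral>\<^sup>+y. h y \<partial>lborel) = (\<integral>\<^sup>+y. h y \<partial>distr lborel borel ((+) c))"
    by (simp add: lborel_distr_plus)
  also have "\<dots> = (\<integral>\<^sup>+y. h (c + y) \<partial>lborel)" by (simp add: nn_integral_distr)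
  finally show ?thesis by (simp add: add.commute)
qed

text \<open>Fubini, then translation invariance in the k-th coordinate.\<close>

lemma nn_integral_lborel_shear:
  fixes f :: "'a::euclidean_space^'n::finite \<Rightarrow> ennreal" and t :: "'a^'n \<Rightarrow> 'a"
  assumes [measurable]: "f \<in> borel_measurable borel" "t \<in> borel_measurable borel"
    and t_indep: "\<And>z w. (\<And>j. j \<noteq> k \<Longrightarrow> z$j = w$j) \<Longrightarrow> t z = t w"
  shows "(\<integral>\<^sup>+z. f (z + axis k (t z)) \<partial>lborel) = (\<integral>\<^sup>+z. f z \<partial>lborel)"
proof -
  interpret P: product_sigma_finite "\<lambda>_::'n. lborel::'a measure" by standard
  define U where "U = UNIV - {k}"
  have UNIV_eq: "(UNIV::'n set) = insert k U" and "k \<notin> U" "finite U" by (auto simp: U_def)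
  note insert = P.product_nn_integral_insert[OF \<open>finite U\<close> \<open>k \<notin> U\<close>]
  have shift: "vec_lambda (x(k := y)) + axis k (t (vec_lambda (x(k := y))))
      = vec_lambda (x(k := y + t (vec_lambda (x(k := 0)))))" for x :: "'n \<Rightarrow> 'a" and y
  proof -
    have "t (vec_lambda (x(k := y))) = t (vec_lambda (x(k := 0)))" by (rule t_indep) simp
    then show ?thesis by (simp add: vec_eq_iff axis_def)
  qed
  have [measurable]: "(\<lambda>y. vec_lambda (x(k := y)) :: 'a^'n) \<in> borel_measurable borel" for x :: "'n \<Rightarrow> 'a"
    unfolding fun_upd_def by simp
  have "(\<integral>\<^sup>+z. f (z + axis k (t z)) \<partial>lborel)
      = (\<integral>\<^sup>+w. f (vec_lambda w + axis k (t (vec_lambda w))) \<partial>PiM (insert k U) (\<lambda>_. lborel))"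
    by (subst nn_integral_lborel_vec_eq_PiM) (simp_all add: UNIV_eq[symmetric])
  also have "\<dots> = (\<integral>\<^sup>+x. (\<integral>\<^sup>+y. f (vec_lambda (x(k := y + t (vec_lambda (x(k := 0)))))) \<partial>lborel) \<partial>PiM U (\<lambda>_. lborel))"
    by (subst insert) (simp_all add: UNIV_eq[symmetric] shift)
  also have "\<dots> = (\<integral>\<^sup>+x. (\<integral>\<^sup>+y. f (vec_lambda (x(k := y))) \<partial>lborel) \<partial>PiM U (\<lambda>_. lborel))"
    by (intro nn_integral_cong nn_integral_lborel_translate[where h="\<lambda>y. f (vec_lambda (_(k := y)))"]) simp
  also have "\<dots> = (\<integral>\<^sup>+w. f (vec_lambda w) \<partial>PiM (insert k U) (\<lambda>_. lborel))"
    by (subst insert) (simp_all add: UNIV_eq[symmetric])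
  also have "\<dots> = (\<integral>\<^sup>+z. f z \<partial>lborel)"
    by (subst nn_integral_lborel_vec_eq_PiM) (simp_all add: UNIV_eq[symmetric])
  finally show ?thesis .
qed

lemma nn_integral_lborel_columns:
  fixes f :: "'c::finite \<Rightarrow> 'a::euclidean_space^'t::finite \<Rightarrow> ennreal"
  assumes [measurable]: "\<And>j. f j \<in> borel_measurable borel"
  shows "(\<integral>\<^sup>+X. (\<Prod>j\<in>UNIV. f j (column j X)) \<partial>(lborel::('a^'c^'t) measure)) = (\<Prod>j\<in>UNIV. \<integral>\<^sup>+x. f j x \<partial>lborel)"
proof -
  interpret P: product_sigma_finite "\<lambda>_::'c. lborel::('a^'t) measure" by standard
  have column_eq: "column j (\<chi> i j. w j $ i) = w j" for j and w :: "'c \<Rightarrow> 'a^'t"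
    by (simp add: column_def vec_eq_iff)
  have [measurable]: "(\<lambda>X::'a^'c^'t. column j X) \<in> borel_measurable borel" for j
    unfolding column_def by measurable
  have "(\<integral>\<^sup>+X. (\<Prod>j\<in>UNIV. f j (column j X)) \<partial>(lborel::('a^'c^'t) measure))
      = (\<integral>\<^sup>+w. (\<Prod>j\<in>UNIV. f j (w j)) \<partial>PiM UNIV (\<lambda>_. lborel))"
    by (subst lborel_eq_distr_columns[symmetric], subst nn_integral_distr) (simp_all add: column_eq)
  also have "\<dots> = (\<Prod>j\<in>UNIV. \<integral>\<^sup>+x. f j x \<partial>lborel)"
    by (rule P.product_nn_integral_prod) auto
  finally show ?thesis .
qed

lemma integral_lborel_columns:
  fixes f :: "'c::finite \<Rightarrow> 'a::euclidean_space^'t::finite \<Rightarrow> real"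
  assumes [measurable]: "\<And>j. f j \<in> borel_measurable borel"
    and nonneg: "\<And>j x. 0 \<le> f j x" "\<And>j. 0 \<le> v j"
    and nn_integral: "\<And>j. (\<integral>\<^sup>+x. ennreal (f j x) \<partial>lborel) = ennreal (v j)"
  shows "(\<integral>X. (\<Prod>j\<in>UNIV. f j (column j X)) \<partial>lborel) = (\<Prod>j\<in>UNIV. v j)"
proof -
  have [measurable]: "(\<lambda>X::'a^'c^'t. column j X) \<in> borel_measurable borel" for j
    unfolding column_def by measurable
  have "(\<integral>\<^sup>+X. ennreal (\<Prod>j\<in>UNIV. f j (column j X)) \<partial>lborel) = ennreal (\<Prod>j\<in>UNIV. v j)"
    using nonneg nn_integral_lborel_columns[of "\<lambda>j x. ennreal (f j x)"]
    by (simp add: prod_ennreal[symmetric] nn_integral)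
  then show ?thesis
    using nonneg by (simp add: integral_eq_nn_integral prod_nonneg)
qed

section \<open>Real and complex Gaussian integrals\<close>

lemma nn_integral_gaussian_real:
  fixes d :: real assumes d: "d > 0"
  shows "(\<integral>\<^sup>+x. ennreal (exp (- d * x\<^sup>2)) \<partial>lborel) = ennreal (sqrt (pi / d))"
proof -
  define \<sigma> where "\<sigma> = sqrt (1 / (2 * d))"
  have \<sigma>: "\<sigma> > 0" "\<sigma>\<^sup>2 = 1 / (2 * d)" using d by (simp_all add: \<sigma>_def)
  have "exp (- d * x\<^sup>2) = sqrt (pi / d) * normal_density 0 \<sigma> x" for x
    using d by (simp add: normal_density_def \<sigma> field_simps)
  moreover have "has_bochner_integral lborel (normal_density 0 \<sigma>) 1"
    using normal_moment_even[OF \<sigma>(1), of 0 0] by simp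
  ultimately have "has_bochner_integral lborel (\<lambda>x. exp (- d * x\<^sup>2)) (sqrt (pi / d))"
    using has_bochner_integral_mult_right[of "sqrt (pi / d)"] by fastforce
  then show ?thesis
    using nn_integral_eq_integral[of lborel "\<lambda>x. exp (- d * x\<^sup>2)"] by (simp add: has_bochner_integral_iff)
qed

lemma nn_integral_gaussian_euclidean:
  fixes d :: real assumes d: "d > 0"
  shows "(\<integral>\<^sup>+x. ennreal (exp (- d * (norm x)\<^sup>2)) \<partial>(lborel::'a::euclidean_space measure))
       = ennreal (sqrt (pi / d) ^ DIM('a))"
proof -
  have "(\<integral>\<^sup>+x. ennreal (exp (- d * (norm x)\<^sup>2)) \<partial>(lborel::'a measure))
      = (\<integral>\<^sup>+x. (\<Prod>b\<in>Basis. ennreal (exp (- d * (x \<bullet> b)\<^sup>2))) \<partial>(lborel::'a measure))"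
  proof (intro nn_integral_cong)
    fix x :: 'a
    have "(norm x)\<^sup>2 = (\<Sum>b\<in>Basis. (x \<bullet> b)\<^sup>2)"
      using power2_norm_eq_inner[of x] euclidean_inner[of x x] by (simp add: power2_eq_square)
    then show "ennreal (exp (- d * (norm x)\<^sup>2)) = (\<Prod>b\<in>Basis. ennreal (exp (- d * (x \<bullet> b)\<^sup>2)))"
      by (simp add: prod_ennreal exp_sum[symmetric] sum_negf sum_distrib_left)
  qed
  also have "\<dots> = (\<Prod>b\<in>(Basis::'a set). (\<integral>\<^sup>+x. ennreal (exp (- d * x\<^sup>2)) \<partial>lborel))"
    by (rule nn_integral_lborel_prod) auto
  also have "\<dots> = ennreal (sqrt (pi / d) ^ DIM('a))"
    using nn_integral_gaussian_real[OF d] d by (simp add: ennreal_power)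
  finally show ?thesis .
qed

lemma nn_integral_gaussian_diagonal:
  fixes d :: "'n::finite \<Rightarrow> real" assumes d: "\<And>i. d i > 0"
  shows "(\<integral>\<^sup>+z. ennreal (exp (- (\<Sum>i\<in>UNIV. d i * (cmod (z$i))\<^sup>2))) \<partial>(lborel::(complex^'n) measure))
       = ennreal (\<Prod>i\<in>UNIV. pi / d i)"
proof -
  interpret P: product_sigma_finite "\<lambda>_::'n. lborel::complex measure" by standard
  have complex_case: "(\<integral>\<^sup>+z. ennreal (exp (- (c * (cmod z)\<^sup>2))) \<partial>lborel) = ennreal (pi / c)" if "c > 0" for c
    using nn_integral_gaussian_euclidean[OF that, where 'a=complex] that by simp
  have "(\<integral>\<^sup>+z. ennreal (exp (- (\<Sum>i\<in>UNIV. d i * (cmod (z$i))\<^sup>2))) \<partial>(lborel::(complex^'n) measure))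
     = (\<integral>\<^sup>+w. (\<Prod>i\<in>UNIV. ennreal (exp (- d i * (cmod (w i))\<^sup>2))) \<partial>PiM UNIV (\<lambda>_. lborel))"
    by (subst nn_integral_lborel_vec_eq_PiM)
      (simp_all add: prod_ennreal exp_sum[symmetric] sum_negf)
  also have "\<dots> = (\<Prod>i\<in>UNIV. (\<integral>\<^sup>+z. ennreal (exp (- d i * (cmod z)\<^sup>2)) \<partial>(lborel::complex measure)))"
    by (rule P.product_nn_integral_prod) auto
  also have "\<dots> = ennreal (\<Prod>i\<in>UNIV. pi / d i)"
    using d by (simp add: complex_case prod_ennreal less_imp_le)
  finally show ?thesis .
qed

section \<open>Complex matrices and Hermitian forms\<close>

lemma mult_if_zero:
  "(if P then a else 0) * (x::'a::semiring_0) = (if P then a * x else 0)"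
  "x * (if P then a else 0) = (if P then x * a else 0)"
  "cnj (if P then z else w) = (if P then cnj z else cnj w)"
  by auto

lemma vec_scaleR_nth: "(c *\<^sub>R (v::complex^'n))$i = complex_of_real c * v$i"
  by (subst vector_scaleR_component) (rule scaleR_conv_of_real)

lemma mat_scaleR_nth: "(c *\<^sub>R (A::complex^'n^'m))$i$j = complex_of_real c * A$i$j"
  by (subst vector_scaleR_component)+ (rule scaleR_conv_of_real)

lemma scaleR_matrix_vector_mult: "(c *\<^sub>R A) *v x = c *\<^sub>R (A *v (x::complex^'n::finite))"
  by (simp add: vec_eq_iff matrix_vector_mult_def scaleR_sum_right)

lemma matrix_vector_mult_scaleR: "A *v (c *\<^sub>R x) = c *\<^sub>R (A *v (x::complex^'n::finite))"
  by (simp add: vec_eq_iff matrix_vector_mult_def scaleR_sum_right)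

lemma det_scaleR: "det (c *\<^sub>R (A::complex^'n::finite^'n)) = complex_of_real c ^ CARD('n) * det A"
proof -
  have "det (c *\<^sub>R A) = (\<Sum>p\<in>{p. p permutes UNIV}.
          complex_of_real c ^ CARD('n) * (of_int (sign p) * (\<Prod>i\<in>UNIV. A $ i $ p i)))"
    unfolding det_def mat_scaleR_nth by (simp add: prod.distrib mult.left_commute)
  then show ?thesis
    unfolding det_def by (simp add: sum_distrib_left)
qed

lemma invertible_matrix_inv:
  assumes "invertible (A::'a::semiring_1^'n^'m)"
  shows "A ** matrix_inv A = mat 1" "matrix_inv A ** A = mat 1"
  using someI_ex[OF assms[unfolded invertible_def]] unfolding matrix_inv_def by auto

lemma cadj_nth[simp]: "cadj A $ i $ j = cnj (A $ j $ i)"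
  by (simp add: cadj_def)

lemma cadj_cadj[simp]: "cadj (cadj A) = A"
  by (simp add: vec_eq_iff)

lemma cadj_mult: "cadj (A ** B) = cadj B ** cadj (A :: complex^'n::finite^'m::finite)"
  by (simp add: vec_eq_iff matrix_matrix_mult_def mult.commute)

lemma cadj_add: "cadj (A + B) = cadj A + cadj B"
  by (simp add: vec_eq_iff)

lemma cadj_diff: "cadj (A - B) = cadj A - cadj B"
  by (simp add: vec_eq_iff)

lemma cadj_scaleR: "cadj (r *\<^sub>R A) = r *\<^sub>R cadj A"
  by (simp add: vec_eq_iff)

lemma cadj_mat1[simp]: "cadj (mat 1 :: complex^'n^'n) = mat 1"
  by (simp add: vec_eq_iff mat_def)

lemma det_cadj: "det (cadj A) = cnj (det (A::complex^'n::finite^'n))"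
proof -
  have "cadj A = transpose (\<chi> i j. cnj (A$i$j))"
    by (simp add: vec_eq_iff transpose_def)
  then have "det (cadj A) = det (\<chi> i j. cnj (A$i$j))" by (simp add: det_transpose)
  then show ?thesis by (simp add: det_def)
qed

lemma hermitian_entry: "hermitian M \<Longrightarrow> M$j$i = cnj (M$i$j)"
  unfolding hermitian_def by (metis cadj_nth complex_cnj_cnj)

lemma hermitian_diag: "hermitian M \<Longrightarrow> M$i$i = complex_of_real (Re (M$i$i))"
  using hermitian_entry[of M i i] by (simp add: complex_eq_iff)

lemma hermitian_matrix_inv:
  assumes "hermitian B" "invertible B"
  shows "hermitian (matrix_inv B)"
proof -
  note inv = invertible_matrix_inv[OF assms(2)]
  have "cadj (matrix_inv B) ** B = mat 1"
    using arg_cong[OF inv(1), of cadj] assms(1) by (simp add: cadj_mult hermitian_def)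
  then have "cadj (matrix_inv B) = matrix_inv B"
    by (metis inv(1) matrix_mul_assoc matrix_mul_lid matrix_mul_rid)
  then show ?thesis by (simp add: hermitian_def)
qed

definition cinner :: "complex^'n::finite \<Rightarrow> complex^'n \<Rightarrow> complex" where
  "cinner u v = (\<Sum>i\<in>UNIV. cnj (u$i) * v$i)"

definition qform :: "complex^'n::finite^'n \<Rightarrow> complex^'n \<Rightarrow> complex" where
  "qform M z = (\<Sum>i\<in>UNIV. \<Sum>j\<in>UNIV. cnj (z$i) * M$i$j * z$j)"

lemma herm_pd_iff_qform: "herm_pd M \<longleftrightarrow> hermitian M \<and> (\<forall>x. x \<noteq> 0 \<longrightarrow> Re (qform M x) > 0)"
  by (simp add: herm_pd_def qform_def)

lemma qform_zero[simp]: "qform M 0 = 0"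
  by (simp add: qform_def)

lemma qform_eq_cinner: "qform M z = cinner z (M *v z)"
  by (simp add: qform_def cinner_def matrix_vector_mult_def sum_distrib_left mult.assoc)

lemma cnj_cinner: "cnj (cinner u v) = cinner v u"
  by (simp add: cinner_def mult.commute)

lemma cinner_matrix_vector_mult: "cinner u (A *v v) = cinner (cadj A *v u) v"
proof -
  have "cinner u (A *v v) = (\<Sum>i\<in>UNIV. \<Sum>j\<in>UNIV. cnj (u$i) * A$i$j * v$j)"
    by (simp add: cinner_def matrix_vector_mult_def sum_distrib_left mult.assoc)
  also have "\<dots> = (\<Sum>j\<in>UNIV. \<Sum>i\<in>UNIV. cnj (u$i) * A$i$j * v$j)"
    by (rule sum.swap)
  also have "\<dots> = cinner (cadj A *v u) v"
    by (simp add: cinner_def matrix_vector_mult_def sum_distrib_right sum_distrib_left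
        mult.commute mult.left_commute)
  finally show ?thesis .
qed

lemma cinner_add_right: "cinner u (v + w) = cinner u v + cinner u w"
  by (simp add: cinner_def distrib_left sum.distrib)

lemma cinner_diff_right: "cinner u (v - w) = cinner u v - cinner u w"
  by (simp add: cinner_def right_diff_distrib sum_subtractf)

lemma cinner_diff_left: "cinner (u - v) w = cinner u w - cinner v w"
  by (simp add: cinner_def left_diff_distrib sum_subtractf)

lemma cinner_scaleR_right: "cinner u (r *\<^sub>R v) = of_real r * cinner u v"
  by (simp only: cinner_def vec_scaleR_nth sum_distrib_left) (simp add: ac_simps)

lemma cinner_scaleR_left: "cinner (r *\<^sub>R u) v = of_real r * cinner u v"
  by (simp only: cinner_def vec_scaleR_nth sum_distrib_left) (simp add: ac_simps)

lemma cinner_self: "cinner u u = complex_of_real ((norm u)\<^sup>2)"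
proof -
  have "cnj z * z = complex_of_real ((cmod z)\<^sup>2)" for z
    by (metis complex_norm_square mult.commute)
  then have "cinner u u = (\<Sum>i\<in>UNIV. complex_of_real ((cmod (u$i))\<^sup>2))"
    unfolding cinner_def by simp
  also have "\<dots> = complex_of_real ((norm u)\<^sup>2)"
    by (simp add: norm_vec_def L2_set_def sum_nonneg)
  finally show ?thesis .
qed

lemma qform_cadj_mult_mult: "qform (cadj E ** N ** E) z = qform N (E *v z)"
  by (simp add: qform_eq_cinner matrix_vector_mul_assoc[symmetric] cinner_matrix_vector_mult)

lemma cnj_qform_hermitian: "hermitian M \<Longrightarrow> cnj (qform M z) = qform M z"
  unfolding qform_eq_cinner hermitian_def by (metis cinner_matrix_vector_mult cnj_cinner)

lemma qform_mat1: "qform (mat 1) z = complex_of_real ((norm z)\<^sup>2)"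
  by (simp add: qform_eq_cinner cinner_self)

lemma qform_add: "qform (A + B) z = qform A z + qform B z"
  by (simp add: qform_eq_cinner matrix_vector_mult_add_rdistrib cinner_add_right)

lemma qform_diff: "qform (A - B) z = qform A z - qform B z"
  by (simp add: qform_eq_cinner matrix_vector_mult_diff_rdistrib cinner_diff_right)

lemma qform_scaleR: "qform (r *\<^sub>R A) z = of_real r * qform A z"
  by (simp add: qform_eq_cinner scaleR_matrix_vector_mult cinner_scaleR_right)

lemma qform_cadj_mult_self: "qform (cadj H ** H) x = complex_of_real ((norm (H *v x))\<^sup>2)"
  by (simp add: qform_eq_cinner matrix_vector_mul_assoc[symmetric] cinner_matrix_vector_mult cinner_self)

lemma qform_axis: "qform M (axis i 1) = M$i$i"
  by (simp add: qform_def axis_def mult_if_zero cong: if_cong)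

lemma borel_measurable_Re_qform[measurable]: "(\<lambda>z. Re (qform M z)) \<in> borel_measurable borel"
  unfolding qform_def by (intro borel_measurable_continuous_onI continuous_intros)

lemma borel_measurable_matrix_vector_mult[measurable]:
  "(\<lambda>x. (H::complex^'t::finite^'r::finite) *v x) \<in> borel_measurable borel"
  unfolding matrix_vector_mult_def by (intro borel_measurable_continuous_onI continuous_intros)

lemma herm_pd_diag_pos:
  assumes "herm_pd M" shows "Re (M$i$i) > 0"
proof -
  have "axis i (1::complex) \<noteq> 0" by simp
  then show ?thesis using assms by (simp add: herm_pd_iff_qform flip: qform_axis)
qed

lemma herm_pd_scaleR: "c > 0 \<Longrightarrow> herm_pd M \<Longrightarrow> herm_pd (c *\<^sub>R M)"
  by (simp add: herm_pd_iff_qform qform_scaleR hermitian_def cadj_scaleR)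

lemma herm_pd_mat1: "herm_pd (mat 1)"
  by (simp add: herm_pd_iff_qform qform_mat1 hermitian_def)

lemma trace_qform_columns: "trace (M ** X ** cadj X) = (\<Sum>j\<in>UNIV. qform M (column j X))"
proof -
  have "trace (M ** X ** cadj X) = (\<Sum>i\<in>UNIV. \<Sum>j\<in>UNIV. \<Sum>b\<in>UNIV. cnj (X$i$j) * M$i$b * X$b$j)"
    by (simp add: trace_def matrix_matrix_mult_def sum_distrib_right sum_distrib_left
        mult.commute mult.left_commute)
  also have "\<dots> = (\<Sum>j\<in>UNIV. \<Sum>i\<in>UNIV. \<Sum>b\<in>UNIV. cnj (X$i$j) * M$i$b * X$b$j)"
    by (rule sum.swap)
  finally show ?thesis by (simp add: qform_def column_def)
qed

lemma trace_norm_columns: "trace (X ** cadj X) = (\<Sum>j\<in>UNIV. complex_of_real ((norm (column j X))\<^sup>2))"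
  using trace_qform_columns[of "mat 1" X] by (simp add: qform_mat1)

lemma column_matrix_mult: "column j (H ** X) = H *v column j X"
  by (simp add: vec_eq_iff column_def matrix_matrix_mult_def matrix_vector_mult_def)

lemma column_diff: "column j (Y - X) = column j Y - column j X"
  by (simp add: vec_eq_iff column_def)

lemma trace_uminus: "trace (- A) = - trace (A::complex^'n::finite^'n)"
  by (simp add: trace_def sum_negf)

lemma trace_scaleR: "trace (c *\<^sub>R A) = complex_of_real c * trace (A::complex^'n::finite^'n)"
  unfolding trace_def by (simp only: mat_scaleR_nth sum_distrib_left)

section \<open>The Gaussian integral of a Hermitian positive definite form\<close>

definition shear :: "'n::finite \<Rightarrow> complex^'n \<Rightarrow> complex^'n^'n" where
  "shear k c = (\<chi> i j. (if i = j then 1 else 0) + (if i = k then c$j else 0))"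

lemma shear_mult_vec: "shear k c *v z = z + axis k (\<Sum>j\<in>UNIV. c$j * z$j)"
proof -
  have "(shear k c *v z) $ i
      = (\<Sum>j\<in>UNIV. (if i = j then z$j else 0) + (if i = k then c$j * z$j else 0))" for i
    by (simp add: shear_def matrix_vector_mult_def distrib_right mult_if_zero cong: if_cong)
  then show ?thesis by (simp add: vec_eq_iff sum.distrib axis_def)
qed

lemma matrix_mult_shear_nth: "(X ** shear k c)$a$j = X$a$j + X$a$k * c$j"
proof -
  have "(X ** shear k c)$a$j
      = (\<Sum>b\<in>UNIV. (if b = j then X$a$b else 0) + (if b = k then X$a$b * c$j else 0))"
    by (simp add: shear_def matrix_matrix_mult_def distrib_left mult_if_zero cong: if_cong)
  then show ?thesis by (simp add: sum.distrib)
qed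

lemma cadj_shear_mult_nth: "(cadj (shear k c) ** X)$i$j = X$i$j + cnj (c$i) * X$k$j"
proof -
  have "(cadj (shear k c) ** X)$i$j
      = (\<Sum>b\<in>UNIV. (if b = i then X$b$j else 0) + (if b = k then cnj (c$i) * X$b$j else 0))"
    by (simp add: shear_def matrix_matrix_mult_def distrib_right mult_if_zero cong: if_cong)
  then show ?thesis by (simp add: sum.distrib)
qed

lemma det_shear:
  fixes c :: "complex^'n::finite"
  assumes "c$k = 0"
  shows "det (shear k c) = 1"
proof -
  let ?I = "mat 1 :: complex^'n^'n"
  have row_I: "row i ?I = axis i 1" for i by (simp add: row_def mat_def axis_def vec_eq_iff)
  have "c = (\<Sum>j\<in>UNIV - {k}. c$j *s row j ?I)"
    using assms by (auto simp: vec_eq_iff row_I axis_def mult_if_zero)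
  also have "\<dots> \<in> vec.span {row j ?I |j. j \<noteq> k}"
    by (intro vec.span_sum vec.span_scale vec.span_base) auto
  finally have "det (\<chi> i. if i = k then row k ?I + c else row i ?I) = det ?I"
    by (rule det_row_span)
  moreover have "shear k c = (\<chi> i. if i = k then row k ?I + c else row i ?I)"
    by (simp add: vec_eq_iff shear_def row_I axis_def)
  ultimately show ?thesis by simp
qed

lemma nn_integral_gaussian_shear:
  fixes M :: "complex^'n::finite^'n"
  assumes "c$k = 0"
  shows "(\<integral>\<^sup>+z. ennreal (exp (- Re (qform M (shear k c *v z)))) \<partial>lborel)
       = (\<integral>\<^sup>+z. ennreal (exp (- Re (qform M z))) \<partial>lborel)"
  unfolding shear_mult_vec
proof (rule nn_integral_lborel_shear)
  show "(\<lambda>z. \<Sum>j\<in>UNIV. c$j * z$j) \<in> borel_measurable borel"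
    by (intro borel_measurable_continuous_onI continuous_intros)
  fix z w :: "complex^'n" assume "\<And>j. j \<noteq> k \<Longrightarrow> z$j = w$j"
  then show "(\<Sum>j\<in>UNIV. c$j * z$j) = (\<Sum>j\<in>UNIV. c$j * w$j)"
    by (metis (no_types, lifting) assms mult_zero_left sum.cong)
qed measurable

lemma nn_integral_gaussian_herm_pd_diagonal:
  fixes M :: "complex^'n::finite^'n"
  assumes pd: "herm_pd M" and diag: "\<And>i j. i \<noteq> j \<Longrightarrow> M$i$j = 0"
  shows "\<exists>d>0. det M = complex_of_real d
           \<and> (\<integral>\<^sup>+z. ennreal (exp (- Re (qform M z))) \<partial>lborel) = ennreal (pi ^ CARD('n) / d)"
proof -
  define d where "d i = Re (M$i$i)" for i
  have M_ii: "M$i$i = complex_of_real (d i)" for i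
    using pd hermitian_diag[of M i] by (simp add: d_def herm_pd_def)
  have d_pos: "d i > 0" for i
    using herm_pd_diag_pos[OF pd] by (simp add: d_def)
  have row: "(\<Sum>j\<in>UNIV. cnj (z$i) * M$i$j * z$j) = complex_of_real (d i * (cmod (z$i))\<^sup>2)" for z i
  proof -
    have "(\<Sum>j\<in>UNIV. cnj (z$i) * M$i$j * z$j) = cnj (z$i) * M$i$i * z$i"
      using diag by (simp add: sum.remove[where x=i])
    then show ?thesis
      using complex_norm_square[of "z$i"] by (simp add: M_ii mult.commute mult.left_commute)
  qed
  have qform_diag: "Re (qform M z) = (\<Sum>i\<in>UNIV. d i * (cmod (z$i))\<^sup>2)" for z
    by (simp add: qform_def row)
  have "det M = complex_of_real (\<Prod>i\<in>UNIV. d i)"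
    by (subst det_diagonal) (simp_all add: diag M_ii)
  moreover have "(\<Prod>i\<in>UNIV. pi / d i) = pi ^ CARD('n) / (\<Prod>i\<in>UNIV. d i)"
    by (simp add: prod_dividef)
  ultimately show ?thesis
    using d_pos nn_integral_gaussian_diagonal[of d]
    by (intro exI[of _ "\<Prod>i\<in>UNIV. d i"]) (auto simp: qform_diag intro: prod_pos)
qed

lemma herm_pd_eliminate:
  fixes M :: "complex^'n::finite^'n"
  assumes pd: "herm_pd M"
  obtains c N where "c$k = 0" "herm_pd N" "M = cadj (shear k c) ** N ** shear k c"
    "\<And>i j. i \<noteq> j \<Longrightarrow> i = k \<or> j = k \<Longrightarrow> N$i$j = 0"
    "\<And>i j. i \<noteq> k \<Longrightarrow> j \<noteq> k \<Longrightarrow> N$i$j = M$i$j - M$i$k * M$k$j / M$k$k"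
proof
  have herm: "hermitian M" using pd by (simp add: herm_pd_def)
  have cnj_M: "cnj (M$i$j) = M$j$i" for i j using hermitian_entry[OF herm, of i j] by simp
  define a where "a = Re (M$k$k)"
  have M_kk: "M$k$k = complex_of_real a" using hermitian_diag[OF herm] by (simp add: a_def)
  have a: "a > 0" using herm_pd_diag_pos[OF pd] by (simp add: a_def)
  define c where "c = (\<chi> j. if j = k then 0 else M$k$j / complex_of_real a)"
  define N where "N = (\<chi> i j. if i = k \<or> j = k then (if i = j then M$k$k else 0)
                                else M$i$j - M$i$k * M$k$j / complex_of_real a)"
  show ck: "c$k = 0" by (simp add: c_def)
  show "N$i$j = 0" if "i \<noteq> j" "i = k \<or> j = k" for i j
    using that by (auto simp: N_def)
  show "N$i$j = M$i$j - M$i$k * M$k$j / M$k$k" if "i \<noteq> k" "j \<noteq> k" for i j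
    using that by (simp add: N_def M_kk)
  have congr: "cadj (shear k c) ** N ** shear k c = M"
  proof -
    have "(cadj (shear k c) ** N ** shear k c)$i$j = M$i$j" for i j
      unfolding matrix_mult_shear_nth cadj_shear_mult_nth using a
      by (cases "i = k"; cases "j = k") (simp_all add: N_def c_def M_kk cnj_M field_simps)
    then show ?thesis by (simp add: vec_eq_iff)
  qed
  then show "M = cadj (shear k c) ** N ** shear k c" ..
  show "herm_pd N"
    unfolding herm_pd_iff_qform
  proof (intro conjI allI impI)
    show "hermitian N"
      unfolding hermitian_def using a by (auto simp: vec_eq_iff N_def M_kk cnj_M)
    fix u :: "complex^'n" assume "u \<noteq> 0"
    define z where "z = u - axis k (\<Sum>j\<in>UNIV. c$j * u$j)"
    have "shear k c *v z = u"
      using ck by (simp add: z_def shear_mult_vec vec_eq_iff axis_def algebra_simps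
          sum_subtractf mult_if_zero cong: if_cong)
    then have "z \<noteq> 0" and "qform N u = qform M z"
      using \<open>u \<noteq> 0\<close> qform_cadj_mult_mult[of "shear k c" N z] congr by auto
    then show "Re (qform N u) > 0" using pd by (auto simp: herm_pd_iff_qform)
  qed
qed

text \<open>The positivity of det M is proved together with the integral formula, by induction over the
  set of indices outside of which M is diagonal.\<close>

lemma nn_integral_gaussian_herm_pd_det:
  fixes M :: "complex^'n::finite^'n"
  assumes "herm_pd M"
  shows "\<exists>d>0. det M = complex_of_real d
           \<and> (\<integral>\<^sup>+z. ennreal (exp (- Re (qform M z))) \<partial>lborel) = ennreal (pi ^ CARD('n) / d)"
proof -
  have "\<exists>d>0. det M = complex_of_real d
          \<and> (\<integral>\<^sup>+z. ennreal (exp (- Re (qform M z))) \<partial>lborel) = ennreal (pi ^ CARD('n) / d)"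
    if "finite S" "herm_pd M" "\<forall>i j. i \<noteq> j \<and> (i \<notin> S \<or> j \<notin> S) \<longrightarrow> M$i$j = 0"
    for S and M :: "complex^'n^'n"
    using that
  proof (induction S arbitrary: M rule: finite_induct)
    case empty
    show ?case by (rule nn_integral_gaussian_herm_pd_diagonal) (use empty.prems in auto)
  next
    case (insert k S)
    obtain c N where c: "c$k = 0" and N: "herm_pd N" "M = cadj (shear k c) ** N ** shear k c"
        "\<And>i j. i \<noteq> j \<Longrightarrow> i = k \<or> j = k \<Longrightarrow> N$i$j = 0"
        "\<And>i j. i \<noteq> k \<Longrightarrow> j \<noteq> k \<Longrightarrow> N$i$j = M$i$j - M$i$k * M$k$j / M$k$k"
      using herm_pd_eliminate[OF insert.prems(1)] by blast
    have N_diag: "N$i$j = 0" if "i \<noteq> j" "i \<notin> S \<or> j \<notin> S" for i j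
    proof (cases "i = k \<or> j = k")
      case True
      then show ?thesis using N(3) that(1) by blast
    next
      case False
      then have "M$i$j = 0" "M$i$k = 0 \<or> M$k$j = 0" using insert.prems(2) that by auto
      then show ?thesis using N(4) False by auto
    qed
    obtain d where "d > 0" "det N = complex_of_real d"
        "(\<integral>\<^sup>+z. ennreal (exp (- Re (qform N z))) \<partial>lborel) = ennreal (pi ^ CARD('n) / d)"
      using insert.IH[OF N(1)] N_diag by blast
    moreover have "det M = det N"
      using c by (simp add: N(2) det_mul det_cadj det_shear)
    moreover have "(\<integral>\<^sup>+z. ennreal (exp (- Re (qform M z))) \<partial>lborel)
        = (\<integral>\<^sup>+z. ennreal (exp (- Re (qform N z))) \<partial>lborel)"
      using nn_integral_gaussian_shear[OF c, of N] by (simp add: N(2) qform_cadj_mult_mult)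
    ultimately show ?case by auto
  qed
  then show ?thesis using assms by auto
qed

lemma herm_pd_det_pos: "herm_pd M \<Longrightarrow> Re (det M) > 0"
  using nn_integral_gaussian_herm_pd_det by fastforce

lemma herm_pd_det_real: "herm_pd M \<Longrightarrow> det M = complex_of_real (Re (det M))"
  using nn_integral_gaussian_herm_pd_det by fastforce

lemma herm_pd_invertible: "herm_pd M \<Longrightarrow> invertible M"
  using herm_pd_det_pos[of M] by (auto simp: invertible_det_nz)

lemma nn_integral_gaussian_herm_pd:
  fixes M :: "complex^'n::finite^'n"
  assumes "herm_pd M"
  shows "(\<integral>\<^sup>+z. ennreal (exp (- Re (qform M z))) \<partial>lborel) = ennreal (pi ^ CARD('n) / Re (det M))"
  using nn_integral_gaussian_herm_pd_det[OF assms] by auto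

lemma nn_integral_gaussian_herm_pd_shift:
  fixes M :: "complex^'n::finite^'n"
  assumes "herm_pd M"
  shows "(\<integral>\<^sup>+z. ennreal (exp (- Re (qform M (z - m)))) \<partial>lborel) = ennreal (pi ^ CARD('n) / Re (det M))"
  using nn_integral_lborel_translate[of "\<lambda>z. ennreal (exp (- Re (qform M z)))" "- m"]
  by (simp add: nn_integral_gaussian_herm_pd[OF assms])

lemma herm_pd_matrix_inv_minus_scaleR:
  fixes Q :: "complex^'t::finite^'t"
  assumes Q: "herm_pd Q" and r: "r \<ge> 0" and IrQ: "herm_pd (mat 1 - r *\<^sub>R Q)"
  shows "herm_pd (matrix_inv Q - r *\<^sub>R mat 1)"
  unfolding herm_pd_iff_qform
proof (intro conjI allI impI)
  have herm_Q: "hermitian Q" using Q by (simp add: herm_pd_def)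
  note Qi = invertible_matrix_inv[OF herm_pd_invertible[OF Q]]
  show "hermitian (matrix_inv Q - r *\<^sub>R mat 1)"
    using hermitian_matrix_inv[OF herm_Q herm_pd_invertible[OF Q]]
    by (simp add: hermitian_def cadj_diff cadj_scaleR)
  fix x :: "complex^'t" assume "x \<noteq> 0"
  define w where "w = matrix_inv Q *v x"
  have Qw: "Q *v w = x" by (simp add: w_def matrix_vector_mul_assoc Qi)
  then have "w \<noteq> 0" using \<open>x \<noteq> 0\<close> by auto
  then have w_pos: "Re (qform Q w) > 0" using Q by (simp add: herm_pd_iff_qform)
  have "qform (matrix_inv Q) x = cinner (Q *v w) w"
    by (simp add: qform_eq_cinner w_def[symmetric] Qw)
  then have "qform (matrix_inv Q) x = cnj (qform Q w)"
    by (simp add: qform_eq_cinner cnj_cinner)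
  then have "Re (qform (matrix_inv Q - r *\<^sub>R mat 1) x) = Re (qform Q w) - r * (norm x)\<^sup>2"
    by (simp add: qform_diff qform_scaleR qform_mat1 cnj_qform_hermitian[OF herm_Q])
  txt \<open>For r > 0, expand 0 \<le> (w - r x)^* Q (w - r x) and use x^* x - r x^* Q x > 0.\<close>
  moreover have "Re (qform Q w) > r * (norm x)\<^sup>2"
  proof (cases "r = 0")
    case False
    have cinner_Q: "cinner x (Q *v w) = complex_of_real ((norm x)\<^sup>2)" "cinner w (Q *v x) = complex_of_real ((norm x)\<^sup>2)"
      using herm_Q by (simp_all add: Qw cinner_self cinner_matrix_vector_mult hermitian_def)
    have "0 \<le> Re (qform Q (w - r *\<^sub>R x))"
      using Q by (cases "w - r *\<^sub>R x = 0") (auto simp: herm_pd_iff_qform less_imp_le)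
    also have "qform Q (w - r *\<^sub>R x)
        = qform Q w - of_real r * cinner w (Q *v x) - of_real r * cinner x (Q *v w) + of_real r * of_real r * qform Q x"
      by (simp add: qform_eq_cinner matrix_vector_mult_diff_distrib matrix_vector_mult_scaleR cinner_diff_left
          cinner_diff_right cinner_scaleR_left cinner_scaleR_right algebra_simps)
    finally have "2 * r * (norm x)\<^sup>2 - r * (r * Re (qform Q x)) \<le> Re (qform Q w)"
      by (simp add: cinner_Q algebra_simps)
    moreover have "r * (r * Re (qform Q x)) < r * (norm x)\<^sup>2"
      using IrQ \<open>x \<noteq> 0\<close> r False by (simp add: herm_pd_iff_qform qform_diff qform_scaleR qform_mat1)
    ultimately show ?thesis by linarith
  qed (use w_pos in simp)
  ultimately show "Re (qform (matrix_inv Q - r *\<^sub>R mat 1) x) > 0" by simp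
qed

lemma det_mat1_minus_scaleR:
  fixes Q :: "complex^'t::finite^'t"
  assumes Q: "herm_pd Q" and A: "herm_pd (matrix_inv Q - r *\<^sub>R mat 1)"
  shows "Re (det (mat 1 - r *\<^sub>R Q)) = Re (det Q) * Re (det (matrix_inv Q - r *\<^sub>R mat 1))"
proof -
  have "(Q ** (matrix_inv Q - r *\<^sub>R mat 1)) *v v = (mat 1 - r *\<^sub>R Q) *v v" for v
    by (simp add: matrix_vector_mul_assoc[symmetric] matrix_vector_mult_diff_rdistrib
        matrix_vector_mult_diff_distrib scaleR_matrix_vector_mult matrix_vector_mult_scaleR
        matrix_vector_mul_assoc invertible_matrix_inv[OF herm_pd_invertible[OF Q]])
  then have "det (mat 1 - r *\<^sub>R Q) = det Q * det (matrix_inv Q - r *\<^sub>R mat 1)"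
    by (metis det_mul matrix_eq)
  then show ?thesis
    by (subst (asm) herm_pd_det_real[OF Q], subst (asm) herm_pd_det_real[OF A]) simp
qed

section \<open>Completing the square\<close>

text \<open>For a density exp (- x^* A x) of x and a likelihood exp (- |y - H x|^2 / s) of y given x,
  these are the precision and the mean of x given y, and the precision of the marginal of y.\<close>

definition post_prec :: "complex^'t::finite^'t \<Rightarrow> complex^'t^'r::finite \<Rightarrow> real \<Rightarrow> complex^'t^'t" where
  "post_prec A H s = A + (1/s) *\<^sub>R (cadj H ** H)"

definition marg_prec :: "complex^'t::finite^'t \<Rightarrow> complex^'t^'r::finite \<Rightarrow> real \<Rightarrow> complex^'r^'r" where
  "marg_prec A H s = (1/s) *\<^sub>R (mat 1 - (1/s) *\<^sub>R (H ** matrix_inv (post_prec A H s) ** cadj H))"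

definition post_mean :: "complex^'t::finite^'t \<Rightarrow> complex^'t^'r::finite \<Rightarrow> real \<Rightarrow> complex^'r \<Rightarrow> complex^'t" where
  "post_mean A H s y = matrix_inv (post_prec A H s) *v ((1/s) *\<^sub>R (cadj H *v y))"

lemma qform_post_prec:
  "qform (post_prec A H s) x = qform A x + complex_of_real ((norm (H *v x))\<^sup>2 / s)"
  by (simp add: post_prec_def qform_add qform_scaleR qform_cadj_mult_self)

lemma herm_pd_post_prec:
  assumes A: "herm_pd A" and s: "s > 0"
  shows "herm_pd (post_prec A H s)"
  unfolding herm_pd_iff_qform
proof (intro conjI allI impI)
  show "hermitian (post_prec A H s)" using A
    by (simp add: herm_pd_def hermitian_def post_prec_def cadj_add cadj_scaleR cadj_mult)
  fix x :: "complex^'a" assume "x \<noteq> 0"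
  then have "Re (qform A x) > 0" using A by (simp add: herm_pd_iff_qform)
  then show "Re (qform (post_prec A H s) x) > 0" using s by (simp add: qform_post_prec add_pos_nonneg)
qed

lemma complete_square:
  fixes A :: "complex^'t::finite^'t" and H :: "complex^'t^'r::finite"
  assumes A: "herm_pd A" and s: "s > 0"
  shows "qform A x + complex_of_real ((norm (y - H *v x))\<^sup>2 / s)
       = qform (post_prec A H s) (x - post_mean A H s y) + qform (marg_prec A H s) y"
proof -
  let ?B = "post_prec A H s" let ?Bi = "matrix_inv (post_prec A H s)"
  have B: "herm_pd ?B" by (rule herm_pd_post_prec[OF A s])
  have Bi: "?B ** ?Bi = mat 1" by (rule invertible_matrix_inv(1)[OF herm_pd_invertible[OF B]])
  have cadj_B: "cadj ?B = ?B" using B by (simp add: herm_pd_def hermitian_def)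
  have cadj_Bi: "cadj ?Bi = ?Bi"
    using hermitian_matrix_inv[of ?B] B herm_pd_invertible[OF B] by (simp add: herm_pd_def hermitian_def)
  define \<sigma> where "\<sigma> = complex_of_real (1/s)"
  define h where "h = (1/s) *\<^sub>R (cadj H *v y)"
  define m where "m = ?Bi *v h"
  define u where "u = H *v x"
  define T where "T = cinner y (H *v (?Bi *v (cadj H *v y)))"
  have Bm: "?B *v m = h" by (simp add: m_def matrix_vector_mul_assoc Bi)
  have xBx: "cinner x (?B *v x) = qform A x + \<sigma> * cinner u u"
    by (simp add: qform_eq_cinner[symmetric] qform_post_prec \<sigma>_def u_def cinner_self)
  have xh: "cinner x h = \<sigma> * cinner u y"
    by (simp add: h_def cinner_scaleR_right cinner_matrix_vector_mult \<sigma>_def u_def)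
  have mBx: "cinner m (?B *v x) = \<sigma> * cinner y u"
    by (metis cadj_B Bm cinner_matrix_vector_mult cnj_cinner xh complex_cnj_mult complex_cnj_complex_of_real \<sigma>_def)
  have mh: "cinner m h = \<sigma> * \<sigma> * T"
  proof -
    have "cinner m h = cinner h (?Bi *v h)" by (simp add: m_def cinner_matrix_vector_mult cadj_Bi)
    then show ?thesis
      by (simp add: h_def T_def cinner_scaleR_left cinner_scaleR_right matrix_vector_mult_scaleR
          \<sigma>_def cinner_matrix_vector_mult)
  qed
  have "qform ?B (x - m) = cinner x (?B *v x) - cinner x h - cinner m (?B *v x) + cinner m h"
    by (simp add: qform_eq_cinner matrix_vector_mult_diff_distrib Bm cinner_diff_left cinner_diff_right)
  also have "\<dots> = qform A x + \<sigma> * cinner u u - \<sigma> * cinner u y - \<sigma> * cinner y u + \<sigma> * \<sigma> * T"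
    by (simp add: xBx xh mBx mh)
  finally have qform_B: "qform ?B (x - m) = \<dots>" .
  have qform_K: "qform (marg_prec A H s) y = \<sigma> * cinner y y - \<sigma> * \<sigma> * T"
    by (simp add: qform_eq_cinner marg_prec_def scaleR_matrix_vector_mult matrix_vector_mult_diff_rdistrib
        cinner_scaleR_right cinner_diff_right matrix_vector_mul_assoc[symmetric] T_def \<sigma>_def algebra_simps)
  have "complex_of_real ((norm (y - H *v x))\<^sup>2 / s) = \<sigma> * cinner (y - u) (y - u)"
    by (simp add: \<sigma>_def u_def cinner_self)
  also have "\<dots> = \<sigma> * (cinner y y - cinner y u - cinner u y + cinner u u)"
    by (simp add: cinner_diff_left cinner_diff_right algebra_simps)
  finally have norm_term: "complex_of_real ((norm (y - H *v x))\<^sup>2 / s) = \<dots>" .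
  have mean: "post_mean A H s y = m" by (simp add: post_mean_def m_def h_def)
  show ?thesis
    unfolding mean qform_B qform_K norm_term by (simp add: algebra_simps)
qed

lemma herm_pd_marg_prec:
  fixes A :: "complex^'t::finite^'t" and H :: "complex^'t^'r::finite"
  assumes A: "herm_pd A" and s: "s > 0"
  shows "herm_pd (marg_prec A H s)"
  unfolding herm_pd_iff_qform
proof (intro conjI allI impI)
  let ?B = "post_prec A H s"
  have B: "herm_pd ?B" by (rule herm_pd_post_prec[OF A s])
  have "cadj (matrix_inv ?B) = matrix_inv ?B"
    using hermitian_matrix_inv[of ?B] B herm_pd_invertible[OF B] by (simp add: herm_pd_def hermitian_def)
  then show "hermitian (marg_prec A H s)"
    by (simp add: hermitian_def marg_prec_def cadj_scaleR cadj_diff cadj_mult matrix_mul_assoc)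
  fix y :: "complex^'r" assume "y \<noteq> 0"
  define m where "m = post_mean A H s y"
  have "Re (qform A m) + (norm (y - H *v m))\<^sup>2 / s > 0"
  proof (cases "m = 0")
    case True
    then show ?thesis using \<open>y \<noteq> 0\<close> s by simp
  next
    case False
    then have "Re (qform A m) > 0" using A by (simp add: herm_pd_iff_qform)
    then show ?thesis using s by (simp add: add_pos_nonneg)
  qed
  then show "Re (qform (marg_prec A H s) y) > 0"
    using arg_cong[OF complete_square[OF A s, of m y H], of Re] by (simp add: m_def)
qed

lemma woodbury_marg_prec:
  fixes A :: "complex^'t::finite^'t" and H :: "complex^'t^'r::finite"
  assumes A: "herm_pd A" and s: "s > 0"
  shows "(mat 1 + (1/s) *\<^sub>R (H ** matrix_inv A ** cadj H)) ** (s *\<^sub>R marg_prec A H s) = mat 1"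
proof -
  let ?B = "post_prec A H s" let ?Bi = "matrix_inv (post_prec A H s)"
  have B: "herm_pd ?B" by (rule herm_pd_post_prec[OF A s])
  note Bi = invertible_matrix_inv[OF herm_pd_invertible[OF B]]
  note Ai = invertible_matrix_inv[OF herm_pd_invertible[OF A]]
  have sK: "s *\<^sub>R marg_prec A H s = mat 1 - (1/s) *\<^sub>R (H ** ?Bi ** cadj H)"
    using s by (simp add: marg_prec_def)
  have "((mat 1 + (1/s) *\<^sub>R (H ** matrix_inv A ** cadj H)) ** (mat 1 - (1/s) *\<^sub>R (H ** ?Bi ** cadj H))) *v v = v" for v
  proof -
    define p where "p = ?Bi *v (cadj H *v v)"
    define w where "w = v - (1/s) *\<^sub>R (H *v p)"
    have "?B *v p = cadj H *v v"
      by (simp add: p_def matrix_vector_mul_assoc matrix_mul_assoc Bi)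
    then have "cadj H *v w = A *v p"
      by (simp add: w_def post_prec_def matrix_vector_mult_add_rdistrib matrix_vector_mult_diff_distrib
          scaleR_matrix_vector_mult matrix_vector_mult_scaleR matrix_vector_mul_assoc algebra_simps)
    then have "matrix_inv A *v (cadj H *v w) = p" by (simp add: matrix_vector_mul_assoc Ai)
    then have "(mat 1 + (1/s) *\<^sub>R (H ** matrix_inv A ** cadj H)) *v w = v"
      by (simp add: w_def matrix_vector_mult_add_rdistrib scaleR_matrix_vector_mult matrix_vector_mul_assoc[symmetric])
    moreover have "(mat 1 - (1/s) *\<^sub>R (H ** ?Bi ** cadj H)) *v v = w"
      by (simp add: w_def p_def matrix_vector_mult_diff_rdistrib scaleR_matrix_vector_mult matrix_vector_mul_assoc[symmetric])
    ultimately show ?thesis by (simp add: matrix_vector_mul_assoc[symmetric])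
  qed
  then show ?thesis unfolding sK by (simp add: matrix_eq)
qed

lemma nn_integral_gaussian_likelihood:
  fixes A :: "complex^'t::finite^'t" and H :: "complex^'t^'r::finite"
  assumes A: "herm_pd A" and s: "s > 0"
  shows "(\<integral>\<^sup>+x. ennreal (exp (- (Re (qform A x) + (norm (y - H *v x))\<^sup>2 / s))) \<partial>lborel)
       = ennreal (exp (- Re (qform (marg_prec A H s) y)) * (pi ^ CARD('t) / Re (det (post_prec A H s))))"
proof -
  let ?B = "post_prec A H s" and ?K = "marg_prec A H s"
  have B: "herm_pd ?B" by (rule herm_pd_post_prec[OF A s])
  have "(\<integral>\<^sup>+x. ennreal (exp (- (Re (qform A x) + (norm (y - H *v x))\<^sup>2 / s))) \<partial>lborel)
      = (\<integral>\<^sup>+x. ennreal (exp (- Re (qform ?K y))) * ennreal (exp (- Re (qform ?B (x - post_mean A H s y)))) \<partial>lborel)"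
    using arg_cong[OF complete_square[OF A s, of _ y H], of Re]
    by (intro nn_integral_cong) (simp add: ennreal_mult'[symmetric] exp_add[symmetric] algebra_simps)
  also have "\<dots> = ennreal (exp (- Re (qform ?K y))) * ennreal (pi ^ CARD('t) / Re (det ?B))"
    by (simp add: nn_integral_cmult nn_integral_gaussian_herm_pd_shift[OF B])
  also have "\<dots> = ennreal (exp (- Re (qform ?K y)) * (pi ^ CARD('t) / Re (det ?B)))"
    using herm_pd_det_pos[OF B] by (subst ennreal_mult) auto
  finally show ?thesis .
qed

text \<open>Fubini for exp (- (x^* A x + |y - H x|^2 / s)): integrate in x first, or in y first.\<close>

lemma det_post_prec_mult_det_marg_prec:
  fixes A :: "complex^'t::finite^'t" and H :: "complex^'t^'r::finite"
  assumes A: "herm_pd A" and s: "s > 0"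
  shows "Re (det (post_prec A H s)) * Re (det (marg_prec A H s)) = Re (det A) / s ^ CARD('r)"
proof -
  let ?B = "post_prec A H s" and ?K = "marg_prec A H s"
  define f where "f x y = ennreal (exp (- (Re (qform A x) + (norm (y - H *v x))\<^sup>2 / s)))" for x y
  have B: "herm_pd ?B" by (rule herm_pd_post_prec[OF A s])
  have K: "herm_pd ?K" by (rule herm_pd_marg_prec[OF A s])
  have sI: "herm_pd ((1/s) *\<^sub>R (mat 1 :: complex^'r^'r))"
    using s by (simp add: herm_pd_scaleR herm_pd_mat1)
  note dets = herm_pd_det_pos[OF A] herm_pd_det_pos[OF B] herm_pd_det_pos[OF K]
  have "(\<integral>\<^sup>+y. (\<integral>\<^sup>+x. f x y \<partial>lborel) \<partial>lborel)
      = (\<integral>\<^sup>+y. ennreal (pi ^ CARD('t) / Re (det ?B)) * ennreal (exp (- Re (qform ?K y))) \<partial>lborel)"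
    unfolding f_def nn_integral_gaussian_likelihood[OF A s]
    using dets by (intro nn_integral_cong) (simp add: ennreal_mult'[symmetric] mult.commute)
  also have "\<dots> = ennreal (pi ^ CARD('t) / Re (det ?B)) * ennreal (pi ^ CARD('r) / Re (det ?K))"
    by (simp add: nn_integral_cmult nn_integral_gaussian_herm_pd[OF K])
  also have "\<dots> = ennreal (pi ^ CARD('t) / Re (det ?B) * (pi ^ CARD('r) / Re (det ?K)))"
    using dets by (subst ennreal_mult) auto
  finally have yx: "(\<integral>\<^sup>+y. (\<integral>\<^sup>+x. f x y \<partial>lborel) \<partial>lborel) = \<dots>" .
  have "(\<integral>\<^sup>+y. f x y \<partial>lborel)
      = ennreal (exp (- Re (qform A x))) * (\<integral>\<^sup>+y. ennreal (exp (- Re (qform ((1/s) *\<^sub>R mat 1) (y - H *v x)))) \<partial>lborel)"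
    for x
    unfolding f_def
    by (subst nn_integral_cmult[symmetric], measurable)
      (intro nn_integral_cong, simp add: ennreal_mult'[symmetric] exp_add[symmetric] qform_scaleR qform_mat1 algebra_simps)
  also have "\<dots> x = ennreal (pi ^ CARD('r) * s ^ CARD('r)) * ennreal (exp (- Re (qform A x)))" for x
    using s by (simp add: nn_integral_gaussian_herm_pd_shift[OF sI] det_scaleR power_one_over mult.commute)
  finally have "(\<integral>\<^sup>+x. (\<integral>\<^sup>+y. f x y \<partial>lborel) \<partial>lborel)
      = ennreal (pi ^ CARD('r) * s ^ CARD('r)) * ennreal (pi ^ CARD('t) / Re (det A))"
    by (simp add: nn_integral_cmult nn_integral_gaussian_herm_pd[OF A])
  also have "\<dots> = ennreal (pi ^ CARD('r) * s ^ CARD('r) * (pi ^ CARD('t) / Re (det A)))"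
    using dets s by (subst ennreal_mult) auto
  finally have xy: "(\<integral>\<^sup>+x. (\<integral>\<^sup>+y. f x y \<partial>lborel) \<partial>lborel) = \<dots>" .
  have "(\<integral>\<^sup>+y. (\<integral>\<^sup>+x. f x y \<partial>lborel) \<partial>lborel) = (\<integral>\<^sup>+x. (\<integral>\<^sup>+y. f x y \<partial>lborel) \<partial>lborel)"
    by (rule lborel_pair.Fubini') (simp add: f_def)
  then have "pi ^ CARD('t) / Re (det ?B) * (pi ^ CARD('r) / Re (det ?K))
      = pi ^ CARD('r) * s ^ CARD('r) * (pi ^ CARD('t) / Re (det A))"
    unfolding xy yx using dets s by (subst (asm) ennreal_inj) auto
  then show ?thesis using dets s by (simp add: field_simps)
qed

lemma det_I_plus_sandwich:
  fixes A :: "complex^'t::finite^'t" and H :: "complex^'t^'r::finite"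
  assumes A: "herm_pd A" and s: "s > 0"
  shows "Re (det (mat 1 + (1/s) *\<^sub>R (H ** matrix_inv A ** cadj H))) = Re (det (post_prec A H s)) / Re (det A)"
proof -
  let ?D = "mat 1 + (1/s) *\<^sub>R (H ** matrix_inv A ** cadj H)" and ?K = "marg_prec A H s"
  have K: "herm_pd ?K" by (rule herm_pd_marg_prec[OF A s])
  have "det ?D * det (s *\<^sub>R ?K) = 1"
    using arg_cong[OF woodbury_marg_prec[OF A s, of H], of det] by (simp add: det_mul)
  moreover have "det (s *\<^sub>R ?K) = complex_of_real (s ^ CARD('r) * Re (det ?K))"
    by (subst det_scaleR, subst herm_pd_det_real[OF K]) simp
  ultimately have "Re (det ?D * complex_of_real (s ^ CARD('r) * Re (det ?K))) = 1"
    by simp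
  then have D_inv: "Re (det ?D) * (s ^ CARD('r) * Re (det ?K)) = 1"
    by simp
  have "Re (det A) * Re (det ?D) = Re (det (post_prec A H s)) * (Re (det ?D) * (s ^ CARD('r) * Re (det ?K)))"
    using det_post_prec_mult_det_marg_prec[OF A s, of H] s by (simp add: field_simps)
  then have "Re (det A) * Re (det ?D) = Re (det (post_prec A H s))"
    by (simp only: D_inv mult_1_right)
  then show ?thesis
    using herm_pd_det_pos[OF A] by (simp add: field_simps)
qed

lemma det_I_plus_sandwich_ge_1:
  fixes A :: "complex^'t::finite^'t" and H :: "complex^'t^'r::finite"
  assumes A: "herm_pd A" and s: "s > 0"
  shows "Re (det (mat 1 + (1/s) *\<^sub>R (H ** matrix_inv A ** cadj H))) \<ge> 1"
proof -
  let ?B = "post_prec A H s"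
  have B: "herm_pd ?B" by (rule herm_pd_post_prec[OF A s])
  have "(\<integral>\<^sup>+x. ennreal (exp (- Re (qform ?B x))) \<partial>lborel) \<le> (\<integral>\<^sup>+x. ennreal (exp (- Re (qform A x))) \<partial>lborel)"
    using s by (intro nn_integral_mono) (simp add: qform_post_prec)
  then have "pi ^ CARD('t) / Re (det ?B) \<le> pi ^ CARD('t) / Re (det A)"
    using herm_pd_det_pos[OF A]
    by (simp add: nn_integral_gaussian_herm_pd[OF A] nn_integral_gaussian_herm_pd[OF B] ennreal_le_iff)
  then have "Re (det A) \<le> Re (det ?B)"
    using herm_pd_det_pos[OF A] herm_pd_det_pos[OF B] by (simp add: field_simps)
  then show ?thesis
    using herm_pd_det_pos[OF A] by (simp add: det_I_plus_sandwich[OF A s])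
qed

section \<open>The exponent E_0\<close>

lemma E0_integrand_columns:
  fixes Q :: "complex^'t::finite^'t" and H :: "complex^'t^'r::finite"
    and X :: "complex^'c::finite^'t" and Y :: "complex^'c^'r"
  assumes N0: "N0 > 0" and \<rho>: "0 \<le> \<rho>"
  shows "pX Q X * exp (r * (Re (trace (X ** cadj X)) - real CARD('c) * P)) * pYXH N0 Y X H powr (1 / (1 + \<rho>))
    = (pi powr (- real (CARD('t) * CARD('c))) * Re (det Q) powr (- real CARD('c)) * exp (- r * real CARD('c) * P)
        * ((pi * N0) powr (- real (CARD('r) * CARD('c)))) powr (1 / (1 + \<rho>)))
      * (\<Prod>j\<in>UNIV. exp (- (Re (qform (matrix_inv Q - r *\<^sub>R mat 1) (column j X))
                          + (norm (column j Y - H *v column j X))\<^sup>2 / (N0 * (1 + \<rho>)))))"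
proof -
  define c where "c = (pi * N0) powr (- real (CARD('r) * CARD('c)))"
  define e\<^sub>X where "e\<^sub>X = (\<Sum>j\<in>UNIV. Re (qform (matrix_inv Q) (column j X)))"
  define e\<^sub>r where "e\<^sub>r = (\<Sum>j\<in>UNIV. (norm (column j X))\<^sup>2)"
  define e\<^sub>Y where "e\<^sub>Y = (\<Sum>j\<in>UNIV. (norm (column j Y - H *v column j X))\<^sup>2)"
  have "pX Q X = pi powr (- real (CARD('t) * CARD('c))) * Re (det Q) powr (- real CARD('c)) * exp (- e\<^sub>X)"
    by (simp add: pX_def e\<^sub>X_def trace_uminus trace_qform_columns)
  moreover have "Re (trace (X ** cadj X)) = e\<^sub>r"
    by (simp add: e\<^sub>r_def trace_norm_columns)
  moreover have "pYXH N0 Y X H powr (1 / (1 + \<rho>)) = c powr (1 / (1 + \<rho>)) * exp (- e\<^sub>Y / (N0 * (1 + \<rho>)))"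
    using N0 \<rho>
    by (simp add: pYXH_def c_def e\<^sub>Y_def trace_uminus trace_scaleR trace_norm_columns column_diff
        column_matrix_mult powr_mult exp_powr_real)
  moreover have "- e\<^sub>X + r * e\<^sub>r - e\<^sub>Y / (N0 * (1 + \<rho>))
      = - (\<Sum>j\<in>UNIV. Re (qform (matrix_inv Q - r *\<^sub>R mat 1) (column j X))
                    + (norm (column j Y - H *v column j X))\<^sup>2 / (N0 * (1 + \<rho>)))"
    by (simp add: e\<^sub>X_def e\<^sub>r_def e\<^sub>Y_def qform_diff qform_scaleR qform_mat1 sum.distrib sum_subtractf
        sum_distrib_left sum_divide_distrib)
  ultimately show ?thesis
    by (simp add: c_def exp_add[symmetric] exp_sum[symmetric] sum_negf[symmetric] algebra_simps)
qed

lemma integral_likelihood_columns: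
  fixes A :: "complex^'t::finite^'t" and H :: "complex^'t^'r::finite" and Y :: "complex^'c::finite^'r"
  assumes A: "herm_pd A" and s: "s > 0"
  shows "(\<integral>X. (\<Prod>j\<in>UNIV. exp (- (Re (qform A (column j X)) + (norm (column j Y - H *v column j X))\<^sup>2 / s))) \<partial>lborel)
       = (\<Prod>j\<in>(UNIV::'c set). exp (- Re (qform (marg_prec A H s) (column j Y))) * (pi ^ CARD('t) / Re (det (post_prec A H s))))"
proof (rule integral_lborel_columns[where f="\<lambda>j x. exp (- (Re (qform A x) + (norm (column j Y - H *v x))\<^sup>2 / s))"])
  fix j
  show "(\<integral>\<^sup>+x. ennreal (exp (- (Re (qform A x) + (norm (column j Y - H *v x))\<^sup>2 / s))) \<partial>lborel)
      = ennreal (exp (- Re (qform (marg_prec A H s) (column j Y))) * (pi ^ CARD('t) / Re (det (post_prec A H s))))"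
    by (rule nn_integral_gaussian_likelihood[OF A s])
  show "0 \<le> exp (- Re (qform (marg_prec A H s) (column j Y))) * (pi ^ CARD('t) / Re (det (post_prec A H s)))"
    using herm_pd_det_pos[OF herm_pd_post_prec[OF A s, of H]]
    by (intro mult_nonneg_nonneg divide_nonneg_nonneg) auto
qed simp_all

lemma integral_gaussian_columns:
  fixes M :: "complex^'r::finite^'r"
  assumes "herm_pd M"
  shows "(\<integral>Y. (\<Prod>j\<in>UNIV. exp (- Re (qform M (column j Y)))) \<partial>(lborel :: (complex^'c::finite^'r) measure))
       = (pi ^ CARD('r) / Re (det M)) ^ CARD('c)"
  using herm_pd_det_pos[OF assms]
  by (subst integral_lborel_columns[where f="\<lambda>j y. exp (- Re (qform M y))" and v="\<lambda>j. pi ^ CARD('r) / Re (det M)"])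
    (simp_all add: nn_integral_gaussian_herm_pd[OF assms])

lemma E0_constant_eq:
  fixes N0 \<rho> r P dQ dA dB dK :: real and nT nR nc :: nat
  assumes N0: "N0 > 0" and \<rho>: "\<rho> \<ge> 0" and pos: "dQ > 0" "dA > 0" "dB > 0" "dK > 0"
    and dets: "dB * dK = dA / (N0 * (1 + \<rho>)) ^ nR"
  shows "(pi powr (- real (nT * nc)) * dQ powr (- real nc) * exp (- r * real nc * P)
           * ((pi * N0) powr (- real (nR * nc))) powr (1 / (1 + \<rho>))) powr (1 + \<rho>)
         * ((pi ^ nT / dB) powr (1 + \<rho>)) ^ nc * (pi ^ nR / ((1 + \<rho>) ^ nR * dK)) ^ nc
       = exp (- r * real nc * P * (1 + \<rho>)) * (dQ * dA) powr (- real nc * (1 + \<rho>))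
         * (dB / dA) powr (- real nc * \<rho>)"
    (is "?L = ?R")
proof -
  define p where "p = 1 + \<rho>"
  have p: "p > 0" using \<rho> by (simp add: p_def)
  have ln_dB: "ln dB = ln dA - real nR * (ln N0 + ln p) - ln dK"
  proof -
    have "ln (dB * dK) = ln (dA / (N0 * p) ^ nR)" using dets by (simp add: p_def)
    then show ?thesis using pos N0 p by (simp add: ln_mult ln_div ln_realpow)
  qed
  have "?L > 0" using N0 pos p by (simp add: p_def[symmetric])
  moreover have "?R > 0" using pos by simp
  moreover have "ln ?L = p * (- real (nT * nc) * ln pi - real nc * ln dQ - r * real nc * P)
                 - real (nR * nc) * (ln pi + ln N0)
               + real nc * (p * (real nT * ln pi - ln dB) + real nR * ln pi - (real nR * ln p + ln dK))"
    using N0 pos p pi_gt_zero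
    by (simp add: p_def[symmetric] ln_mult ln_div ln_realpow ln_prod ln_powr powr_mult powr_powr
        exp_powr_real algebra_simps)
  moreover have "\<dots> = ln ?R"
    using pos p
    by (simp add: p_def[symmetric] ln_mult ln_div ln_dB field_simps) (simp add: p_def algebra_simps)
  ultimately show ?thesis by simp
qed

lemma E0_inner_integral:
  fixes Q :: "complex^'t::finite^'t" and H :: "complex^'t^'r::finite"
  assumes N0: "N0 > 0" and \<rho>: "0 \<le> \<rho>" and Q: "herm_pd Q" and r: "r \<ge> 0"
    and IrQ: "herm_pd (mat 1 - r *\<^sub>R Q)"
  shows "(\<integral>Y. (\<integral>X. pX Q X * exp (r * (Re (trace (X ** cadj X)) - real CARD('c) * P))
                     * pYXH N0 Y X H powr (1 / (1 + \<rho>)) \<partial>lborel) powr (1 + \<rho>)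
            \<partial>(lborel :: (complex^'c::finite^'r) measure))
     = exp (- r * real CARD('c) * P * (1 + \<rho>)) * Re (det (mat 1 - r *\<^sub>R Q)) powr (- real CARD('c) * (1 + \<rho>))
       * Re (det (mat 1 + (1 / (N0 * (1 + \<rho>))) *\<^sub>R (H ** matrix_inv (matrix_inv Q - r *\<^sub>R mat 1) ** cadj H)))
           powr (- real CARD('c) * \<rho>)"
proof -
  define A where "A = matrix_inv Q - r *\<^sub>R mat 1"
  define s where "s = N0 * (1 + \<rho>)"
  define p where "p = 1 + \<rho>"
  have s: "s > 0" and p: "p > 0" using N0 \<rho> by (simp_all add: s_def p_def)
  have A: "herm_pd A" unfolding A_def by (rule herm_pd_matrix_inv_minus_scaleR[OF Q r IrQ])
  let ?B = "post_prec A H s" and ?K = "marg_prec A H s"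
  have K: "herm_pd ?K" by (rule herm_pd_marg_prec[OF A s])
  note dets = herm_pd_det_pos[OF Q] herm_pd_det_pos[OF A] herm_pd_det_pos[OF herm_pd_post_prec[OF A s, of H]]
    herm_pd_det_pos[OF K]
  define C where "C = pi powr (- real (CARD('t) * CARD('c))) * Re (det Q) powr (- real CARD('c))
      * exp (- r * real CARD('c) * P) * ((pi * N0) powr (- real (CARD('r) * CARD('c)))) powr (1 / (1 + \<rho>))"
  define b where "b = pi ^ CARD('t) / Re (det ?B)"
  have "C > 0" "b > 0" using dets N0 by (simp_all add: C_def b_def)
  have X_integral: "(\<integral>X. pX Q X * exp (r * (Re (trace (X ** cadj X)) - real CARD('c) * P))
                         * pYXH N0 Y X H powr (1 / (1 + \<rho>)) \<partial>lborel)
      = C * (\<Prod>j\<in>UNIV. exp (- Re (qform ?K (column j Y))) * b)" for Y :: "complex^'c^'r"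
    by (simp only: E0_integrand_columns[OF N0 \<rho>] A_def[symmetric] s_def[symmetric] C_def[symmetric]
        integral_mult_right_zero integral_likelihood_columns[OF A s] b_def)
  have "(C * (\<Prod>j\<in>UNIV. exp (- Re (qform ?K (column j Y))) * b)) powr p
      = C powr p * (b powr p) ^ CARD('c) * (\<Prod>j\<in>UNIV. exp (- Re (qform (p *\<^sub>R ?K) (column j Y))))"
    for Y :: "complex^'c^'r"
  proof -
    have "(b ^ n) powr p = (b powr p) ^ n" for n
      using \<open>b > 0\<close> by (simp add: powr_power powr_powr mult.commute flip: powr_realpow)
    then show ?thesis
      using \<open>C > 0\<close> \<open>b > 0\<close>
      by (simp add: powr_mult prod_nonneg prod_powr_distrib prod.distrib exp_powr_real qform_scaleR
        mult.commute mult.left_commute)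
  qed
  then have "(\<integral>Y. (\<integral>X. pX Q X * exp (r * (Re (trace (X ** cadj X)) - real CARD('c) * P))
                     * pYXH N0 Y X H powr (1 / (1 + \<rho>)) \<partial>lborel) powr (1 + \<rho>)
            \<partial>(lborel :: (complex^'c^'r) measure))
      = C powr p * (b powr p) ^ CARD('c) * (pi ^ CARD('r) / Re (det (p *\<^sub>R ?K))) ^ CARD('c)"
    by (simp only: X_integral, simp only: p_def[symmetric])
      (simp add: integral_gaussian_columns[OF herm_pd_scaleR[OF p K]])
  also have "\<dots> = C powr p * (b powr p) ^ CARD('c) * (pi ^ CARD('r) / (p ^ CARD('r) * Re (det ?K))) ^ CARD('c)"
    by (subst det_scaleR, subst herm_pd_det_real[OF K]) simp
  also have "\<dots> = exp (- r * real CARD('c) * P * (1 + \<rho>)) * (Re (det Q) * Re (det A)) powr (- real CARD('c) * (1 + \<rho>))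
       * (Re (det ?B) / Re (det A)) powr (- real CARD('c) * \<rho>)"
    unfolding C_def b_def p_def
    by (rule E0_constant_eq[OF N0 \<rho> dets]) (use det_post_prec_mult_det_marg_prec[OF A s, of H] in \<open>simp add: s_def\<close>)
  also have "Re (det Q) * Re (det A) = Re (det (mat 1 - r *\<^sub>R Q))"
    using det_mat1_minus_scaleR[OF Q A[unfolded A_def]] by (simp add: A_def)
  also have "Re (det ?B) / Re (det A) = Re (det (mat 1 + (1 / s) *\<^sub>R (H ** matrix_inv A ** cadj H)))"
    by (rule det_I_plus_sandwich[OF A s, symmetric])
  finally show ?thesis by (simp add: A_def s_def)
qed

lemma prob_space_H0_law: "prob_space (H0_law :: (complex^'t::finite^'r::finite) measure)"
proof (rule prob_spaceI)
  have "(\<Sum>i\<in>UNIV. \<Sum>j\<in>UNIV. (cmod (H0 $ i $ j))\<^sup>2) = (norm H0)\<^sup>2" for H0 :: "complex^'t^'r"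
    by (simp add: norm_vec_def L2_set_def sum_nonneg)
  then have "emeasure (H0_law :: (complex^'t^'r) measure) (space H0_law)
      = ennreal (pi powr (- real (CARD('r) * CARD('t))))
        * (\<integral>\<^sup>+H0. ennreal (exp (- (norm H0)\<^sup>2)) \<partial>(lborel::(complex^'t^'r) measure))"
    by (simp add: H0_law_def emeasure_density nn_integral_cmult[symmetric] ennreal_mult)
  also have "(\<integral>\<^sup>+H0. ennreal (exp (- (norm H0)\<^sup>2)) \<partial>(lborel::(complex^'t^'r) measure))
      = ennreal (sqrt pi ^ (2 * (CARD('r) * CARD('t))))"
    using nn_integral_gaussian_euclidean[of 1, where 'a="complex^'t^'r"] by (simp add: mult_ac)
  also have "sqrt pi ^ (2 * (CARD('r) * CARD('t))) = pi powr real (CARD('r) * CARD('t))"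
    by (subst powr_realpow) (simp_all add: power_mult)
  finally show "emeasure (H0_law :: (complex^'t^'r) measure) (space H0_law) = 1"
    by (simp add: ennreal_mult[symmetric] powr_add[symmetric])
qed

lemma prob_space_H_law: "prob_space (H_law PhiR PhiT :: (complex^'t::finite^'r::finite) measure)"
proof -
  interpret H0: prob_space "H0_law :: (complex^'t^'r) measure" by (rule prob_space_H0_law)
  have "(\<lambda>H0::complex^'t^'r. pd_sqrt PhiR ** H0 ** pd_sqrt PhiT) \<in> measurable H0_law lborel"
    unfolding H0_law_def matrix_matrix_mult_def
    by (simp add: measurable_cong_sets[OF sets_density refl] borel_measurable_continuous_onI continuous_intros)
  then show ?thesis unfolding H_law_def by (rule H0.prob_space_distr)
qed

lemma sets_H_law[simp]: "sets (H_law PhiR PhiT) = sets borel"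
  by (simp add: H_law_def)

lemma borel_measurable_det_I_plus_sandwich[measurable]:
  "(\<lambda>H::complex^'t::finite^'r::finite. Re (det (mat 1 + c *\<^sub>R (H ** M ** cadj H)))) \<in> borel_measurable borel"
  unfolding det_def matrix_matrix_mult_def cadj_def
  by (intro borel_measurable_continuous_onI continuous_intros)

lemma (in prob_space) integral_pos_of_pos_bounded:
  fixes f :: "'a \<Rightarrow> real"
  assumes [measurable]: "f \<in> borel_measurable M" and pos: "\<And>x. 0 < f x" and bounded: "\<And>x. f x \<le> B"
  shows "0 < integral\<^sup>L M f"
proof -
  have "integrable M f"
    by (rule integrable_const_bound[where B=B]) (auto intro!: AE_I2 simp: abs_of_pos pos bounded)
  moreover have nonneg: "AE x in M. 0 \<le> f x"
    using pos by (simp add: less_imp_le)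
  moreover have "\<not> (AE x in M. f x = 0)"
  proof
    assume "AE x in M. f x = 0"
    then have "AE x in M. False" by (rule eventually_mono) (use pos in \<open>metis less_irrefl\<close>)
    then show False by simp
  qed
  ultimately have "integral\<^sup>L M f \<noteq> 0"
    by (simp add: integral_nonneg_eq_0_iff_AE)
  moreover have "0 \<le> integral\<^sup>L M f"
    using pos by (simp add: integral_nonneg less_imp_le)
  ultimately show ?thesis by simp
qed

theorem proposition1:
  fixes N0 P \<rho> r :: real
    and Q :: "complex^'t^'t" and PhiT :: "complex^'t^'t" and PhiR :: "complex^'r^'r"
  assumes "N0 > 0" and "P > 0" and "0 \<le> \<rho>" and "\<rho> \<le> 1"
    and "herm_pd Q" and "Re (trace Q) \<le> P"
    and "r \<ge> 0" and "herm_pd (mat 1 - r *\<^sub>R Q)"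
    and "herm_pd PhiT" and "herm_pd PhiR"
  shows "E0 N0 P \<rho> r Q PhiR PhiT TYPE('c::finite) =
     r * P * (1 + \<rho>) + (1 + \<rho>) * ln (Re (det (mat 1 - r *\<^sub>R Q)))
     - (1 / real CARD('c)) * ln (\<integral>H.
          Re (det (mat 1 + (1 / (N0 * (1 + \<rho>))) *\<^sub>R
                 (H ** matrix_inv (matrix_inv Q - r *\<^sub>R mat 1) ** cadj H)))
            powr (- real CARD('c) * \<rho>) \<partial>(H_law PhiR PhiT))"
proof -
  let ?D = "\<lambda>H::complex^'t^'r. Re (det (mat 1 + (1 / (N0 * (1 + \<rho>))) *\<^sub>R
                 (H ** matrix_inv (matrix_inv Q - r *\<^sub>R mat 1) ** cadj H)))"
  define G where "G = (\<integral>H. ?D H powr (- real CARD('c) * \<rho>) \<partial>(H_law PhiR PhiT))"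
  have D_ge_1: "?D H \<ge> 1" for H
    using assms(1,3) det_I_plus_sandwich_ge_1[OF herm_pd_matrix_inv_minus_scaleR[OF assms(5,7,8)], of "N0 * (1 + \<rho>)"]
    by simp
  have "?D H powr (- real CARD('c) * \<rho>) > 0" for H
    using D_ge_1[of H] by simp
  moreover have "?D H powr (- real CARD('c) * \<rho>) \<le> 1" for H
    using powr_mono[of "- real CARD('c) * \<rho>" 0 "?D H"] D_ge_1[of H] assms(3) by simp
  ultimately have "G > 0"
    unfolding G_def
    by (intro prob_space.integral_pos_of_pos_bounded[OF prob_space_H_law, where B=1])
      (simp_all add: measurable_cong_sets[OF sets_H_law refl])
  moreover have "E0 N0 P \<rho> r Q PhiR PhiT TYPE('c) = - (1 / real CARD('c)) * ln (
      exp (- r * real CARD('c) * P * (1 + \<rho>)) * Re (det (mat 1 - r *\<^sub>R Q)) powr (- real CARD('c) * (1 + \<rho>)) * G)"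
    unfolding E0_def E0_inner_integral[OF assms(1,3,5,7,8)] G_def by simp
  ultimately show ?thesis
    unfolding G_def[symmetric] using herm_pd_det_pos[OF assms(8)] by (simp add: ln_mult ln_powr field_simps)
qed

end
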